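(* Let $X=\{x=(x_{i,j,k})\in\mathbb{F}_2^{\mathbb{Z}^3}: x_{i,j,k}+x_{i+1,j,k}+x_{i,j+1,k}=0\text{ for all }(i,j,k)\in\mathbb{Z}^3\}$ and let $\alpha$ be the $\mathbb{Z}^3$-action on $X$ by shifts, $(\alpha^{\mathbf{n}}x)_{\mathbf{m}}=x_{\mathbf{m}+\mathbf{n}}$. Then the upper growth rate of periodic points is $\mathsf{g}(\alpha)=\frac23\log2$; in particular $\zeta_\alpha$ has radius of convergence $2^{-2/3}$.
   Context: $\mathcal{L}_3$ is the set of finite-index subgroups of $\mathbb{Z}^3$, $[\Lambda]=|\mathbb{Z}^3/\Lambda|$, $\mathsf{F}_\alpha(\Lambda)$ is the number of $x\in X$ fixed by all $\alpha^{\mathbf{n}}$, $\mathbf{n}\in\Lambda$, $\mathsf{g}(\alpha)=\limsup_{[\Lambda]\to\infty}\frac{1}{[\Lambda]}\log\mathsf{F}_\alpha(\Lambda)$, and $\zeta_\alpha(z)=\exp\left(\sum_{\Lambda\in\mathcal{L}_3}\frac{\mathsf{F}_\alpha(\Lambda)}{[\Lambda]}z^{[\Lambda]}\right)$. *)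

theory Defs
  imports "HOL-Analysis.Analysis" "HOL-Library.Z2" "HOL-Library.Product_Plus"
    "HOL-Computational_Algebra.Formal_Power_Series"
begin

text \<open>Points of Z^3 are triples of integers; F_2 is the library field bit.\<close>
type_synonym pt = "int \<times> int \<times> int"

definition is_subgroup3 :: "pt set \<Rightarrow> bool" where
  "is_subgroup3 L \<longleftrightarrow> 0 \<in> L \<and> (\<forall>a\<in>L. \<forall>b\<in>L. a + b \<in> L) \<and> (\<forall>a\<in>L. - a \<in> L)"

definition cosets3 :: "pt set \<Rightarrow> pt set set" where
  "cosets3 L = range (\<lambda>v. (\<lambda>l. v + l) ` L)"

definition L3 :: "pt set set" where
  "L3 = {L. is_subgroup3 L \<and> finite (cosets3 L)}"

definition idx :: "pt set \<Rightarrow> nat" where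
  "idx L = card (cosets3 L)"

definition Xsys :: "(pt \<Rightarrow> bit) set" where
  "Xsys = {x. \<forall>i j k. x (i,j,k) + x (i+1,j,k) + x (i,j+1,k) = 0}"

definition shift :: "pt \<Rightarrow> (pt \<Rightarrow> bit) \<Rightarrow> (pt \<Rightarrow> bit)" where
  "shift n x = (\<lambda>m. x (m + n))"

definition Fix :: "pt set \<Rightarrow> nat" where
  "Fix L = card {x \<in> Xsys. \<forall>n\<in>L. shift n x = x}"

text \<open>The filter "[L] \<rightarrow> \<infinity>" on L_3.\<close>
definition index_filter :: "pt set filter" where
  "index_filter = (INF N. principal {L \<in> L3. N \<le> idx L})"

definition growth :: ereal where
  "growth = Limsup index_filter (\<lambda>L. ereal (ln (real (Fix L)) / real (idx L)))"

text \<open>zeta = exp(A(z)) with A(z) = sum over L in L_3 of Fix L / [L] z^[L], as formal power series.\<close>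
definition logzeta_fps :: "real fps" where
  "logzeta_fps = Abs_fps (\<lambda>n. \<Sum>L\<in>{L\<in>L3. idx L = n}. real (Fix L) / real (idx L))"

definition zeta_fps :: "real fps" where
  "zeta_fps = fps_exp 1 oo logzeta_fps"

end

theory Submission
  imports Defs "HOL-Real_Asymp.Real_Asymp"
begin

text \<open>
  A finite-index subgroup L of Z^3 has a Hermite basis (m,0,0), (a,r,0), (b,c,q) with m r q \<le> [L].
  Since x(i,j+1,k) = x(i,j,k) + x(i+1,j,k), an L-periodic point is determined by its rows j = 0,
  0 \<le> k < q, each of which is m-periodic; these are m q \<le> 2[L]/3 values if r \<ge> 2. If r = 1, the
  period (a,1,0) turns each row into an m-periodic solution of v(i) + v(i+1) + v(i+m-a) = 0, which is
  fixed by min(s, m-s+1) \<le> 2m/3 of its values (s = m - a). Hence F(L) \<le> 2^(2[L]/3).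
  Conversely the subgroup {3 | i - j, N | k} of index 3N has 4^N periodic points: one free pair
  (u, v) in F_2^2 for each class of k mod N. Hermite bases also show that there are at most
  (n+1)^6 subgroups of index n, so the coefficients of log zeta grow like 2^(2n/3) up to polynomial
  factors, and exponentiating a series with nonnegative coefficients does not change its radius of convergence.
\<close>

text \<open>The library simplifies + on bit to XOR, which hides the field arithmetic used below.\<close>
declare add_bit_eq_xor [simp del]

section \<open>Subgroups of Z^3 and Hermite bases\<close>

fun smul :: "int \<Rightarrow> pt \<Rightarrow> pt" where
  "smul c (x, y, z) = (c * x, c * y, c * z)"

lemma smul_diff_left: "smul (c - d) v = smul c v - smul d v"
  by (cases v) (simp add: algebra_simps)

definition coset :: "pt \<Rightarrow> pt set \<Rightarrow> pt set" where
  "coset v L = (+) v ` L"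

lemma cosets3_eq_range_coset: "cosets3 L = range (\<lambda>v. coset v L)"
  by (simp add: cosets3_def coset_def)

context
  fixes L :: "pt set"
  assumes L: "is_subgroup3 L"
begin

lemma subgroup3_zero: "0 \<in> L"
  using L by (simp add: is_subgroup3_def)

lemma subgroup3_add: "a \<in> L \<Longrightarrow> b \<in> L \<Longrightarrow> a + b \<in> L"
  using L by (simp add: is_subgroup3_def)

lemma subgroup3_uminus: "a \<in> L \<Longrightarrow> - a \<in> L"
  using L by (simp add: is_subgroup3_def)

lemma subgroup3_diff: "a \<in> L \<Longrightarrow> b \<in> L \<Longrightarrow> a - b \<in> L"
  using subgroup3_add[of a "- b"] subgroup3_uminus[of b] by simp

lemma subgroup3_smul:
  assumes "v \<in> L"
  shows "smul c v \<in> L"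
proof -
  have nat: "smul (int k) v \<in> L" for k
  proof (induction k)
    case 0
    show ?case using subgroup3_zero by (cases v) (simp add: zero_prod_def)
  next
    case (Suc k)
    have "smul (int (Suc k)) v = smul (int k) v + v"
      by (cases v) (simp add: algebra_simps)
    then show ?case using Suc subgroup3_add[OF _ assms] by simp
  qed
  show ?thesis
  proof (cases "c \<ge> 0")
    case True
    then show ?thesis using nat[of "nat c"] by simp
  next
    case False
    then have "smul c v = - smul (int (nat (- c))) v" by (cases v) simp
    then show ?thesis using subgroup3_uminus[OF nat[of "nat (- c)"]] False by simp
  qed
qed

lemma subgroup3_diff_smul: "a \<in> L \<Longrightarrow> b \<in> L \<Longrightarrow> a - smul c b \<in> L"
  by (simp add: subgroup3_diff subgroup3_smul)

lemma coset_eq_iff: "coset v L = coset w L \<longleftrightarrow> v - w \<in> L"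
proof
  assume eq: "coset v L = coset w L"
  have "v \<in> coset w L" using subgroup3_zero eq by (force simp: coset_def)
  then obtain l where "l \<in> L" "v = w + l" by (auto simp: coset_def)
  then show "v - w \<in> L" by simp
next
  assume vw: "v - w \<in> L"
  have "coset v L \<subseteq> coset w L" if "v - w \<in> L" for v w
  proof
    fix x assume "x \<in> coset v L"
    then obtain l where "l \<in> L" "x = v + l" by (auto simp: coset_def)
    then have "x = w + ((v - w) + l)" "(v - w) + l \<in> L"
      using that subgroup3_add by auto
    then show "x \<in> coset w L" unfolding coset_def by (intro image_eqI)
  qed
  moreover have "w - v \<in> L" using subgroup3_uminus[OF vw] by simp
  ultimately show "coset v L = coset w L" using vw by blast
qed

end

lemma L3_subgroup3: "L \<in> L3 \<Longrightarrow> is_subgroup3 L"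
  by (simp add: L3_def)

lemma L3_finite_cosets: "L \<in> L3 \<Longrightarrow> finite (cosets3 L)"
  by (simp add: L3_def)

text \<open>Pigeonhole on the cosets of the multiples 0, u, ..., [L] u.\<close>
lemma L3_smul_mem:
  assumes L: "L \<in> L3"
  obtains k where "k > 0" "smul k u \<in> L"
proof -
  have sg: "is_subgroup3 L" using L by (rule L3_subgroup3)
  define f where "f k = coset (smul (int k) u) L" for k
  have "f ` {0..idx L} \<subseteq> cosets3 L" by (auto simp: f_def cosets3_eq_range_coset)
  then have "\<not> inj_on f {0..idx L}"
    using card_inj_on_le[OF _ _ L3_finite_cosets[OF L]] by (fastforce simp: idx_def)
  then obtain k1 k2 where "k1 \<noteq> k2" "f k1 = f k2" by (auto simp: inj_on_def)
  moreover have "smul (int i - int j) u \<in> L" if "f i = f j" for i j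
    using that coset_eq_iff[OF sg] by (simp only: f_def smul_diff_left)
  ultimately have "smul (int k1 - int k2) u \<in> L" "smul (int k2 - int k1) u \<in> L" by metis+
  with \<open>k1 \<noteq> k2\<close> show thesis
    by (cases "k1 < k2") (auto intro: that[of "int k2 - int k1"] that[of "int k1 - int k2"])
qed

lemma least_positive_dvd:
  fixes S :: "int set"
  assumes closed: "\<And>a b c. a \<in> S \<Longrightarrow> b \<in> S \<Longrightarrow> a - c * b \<in> S"
    and "k \<in> S" "k > 0"
  obtains m where "m > 0" "m \<in> S" "\<And>x. x \<in> S \<Longrightarrow> m dvd x"
proof -
  define n where "n = (LEAST n::nat. n > 0 \<and> int n \<in> S)"
  have "n > 0 \<and> int n \<in> S"
    unfolding n_def by (rule LeastI[of _ "nat k"]) (use assms in simp)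
  then have n: "n > 0" "int n \<in> S" by auto
  have "int n dvd x" if "x \<in> S" for x
  proof (rule ccontr)
    assume "\<not> int n dvd x"
    then have pos: "0 < x mod int n" using n(1)
      by (metis dvd_eq_mod_eq_0 le_less of_nat_0_less_iff pos_mod_sign)
    have "x mod int n \<in> S"
      using closed[OF that n(2), of "x div int n"] by (simp add: minus_div_mult_eq_mod)
    then have "n \<le> nat (x mod int n)"
      using pos unfolding n_def by (intro Least_le) simp
    moreover have "x mod int n < int n" using n(1) by simp
    ultimately show False using pos by linarith
  qed
  with n show thesis by (intro that[of "int n"]) auto
qed

text \<open>Hermite normal form: L has the basis (m,0,0), (a,r,0), (b,c,q) with the
  off-diagonal entries reduced modulo the diagonal ones.\<close>
definition hermite_basis :: "pt set \<Rightarrow> int \<times> int \<times> int \<times> int \<times> int \<times> int \<Rightarrow> bool" where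
  "hermite_basis L = (\<lambda>(m, r, q, a, b, c).
     0 < m \<and> 0 < r \<and> 0 < q \<and> 0 \<le> a \<and> a < m \<and> 0 \<le> b \<and> b < m \<and> 0 \<le> c \<and> c < r \<and>
     (m, 0, 0) \<in> L \<and> (a, r, 0) \<in> L \<and> (b, c, q) \<in> L \<and>
     (\<forall>x. (x, 0, 0) \<in> L \<longrightarrow> m dvd x) \<and> (\<forall>x y. (x, y, 0) \<in> L \<longrightarrow> r dvd y) \<and>
     (\<forall>x y z. (x, y, z) \<in> L \<longrightarrow> q dvd z))"

lemma L3_diagonal:
  assumes L: "L \<in> L3"
  obtains m r q a b c where "0 < m" "0 < r" "0 < q" "(m, 0, 0) \<in> L" "(a, r, 0) \<in> L" "(b, c, q) \<in> L"
    "\<And>x. (x, 0, 0) \<in> L \<Longrightarrow> m dvd x" "\<And>x y. (x, y, 0) \<in> L \<Longrightarrow> r dvd y"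
    "\<And>x y z. (x, y, z) \<in> L \<Longrightarrow> q dvd z"
proof -
  have sg: "is_subgroup3 L" using L by (rule L3_subgroup3)
  note reduce = subgroup3_diff_smul[OF sg]
  obtain k1 where k1: "k1 > 0" "smul k1 (1, 0, 0) \<in> L" by (rule L3_smul_mem[OF L])
  obtain k2 where k2: "k2 > 0" "smul k2 (0, 1, 0) \<in> L" by (rule L3_smul_mem[OF L])
  obtain k3 where k3: "k3 > 0" "smul k3 (0, 0, 1) \<in> L" by (rule L3_smul_mem[OF L])
  define S1 where "S1 = {x. (x, 0, 0) \<in> L}"
  define S2 where "S2 = {y. \<exists>x. (x, y, 0) \<in> L}"
  define S3 where "S3 = {z. \<exists>x y. (x, y, z) \<in> L}"
  have "a - c * b \<in> S1" if "a \<in> S1" "b \<in> S1" for a b c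
    using reduce[of "(a, 0, 0)" "(b, 0, 0)" c] that by (simp add: S1_def zero_prod_def)
  moreover have "k1 \<in> S1" using k1 by (simp add: S1_def)
  ultimately obtain m where m: "m > 0" "m \<in> S1" and m_dvd: "\<And>x. x \<in> S1 \<Longrightarrow> m dvd x"
    using least_positive_dvd k1(1) by blast
  have "a - c * b \<in> S2" if ab: "a \<in> S2" "b \<in> S2" for a b c
  proof -
    obtain x x' where "(x, a, 0) \<in> L" "(x', b, 0) \<in> L" using ab by (auto simp: S2_def)
    then show ?thesis using reduce[of "(x, a, 0)" "(x', b, 0)" c] by (auto simp: S2_def)
  qed
  moreover have "k2 \<in> S2" using k2 by (auto simp: S2_def)
  ultimately obtain r where r: "r > 0" "r \<in> S2" and r_dvd: "\<And>y. y \<in> S2 \<Longrightarrow> r dvd y"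
    using least_positive_dvd k2(1) by blast
  have "a - c * b \<in> S3" if ab: "a \<in> S3" "b \<in> S3" for a b c
  proof -
    obtain x y x' y' where "(x, y, a) \<in> L" "(x', y', b) \<in> L" using ab by (auto simp: S3_def)
    then show ?thesis using reduce[of "(x, y, a)" "(x', y', b)" c] by (auto simp: S3_def)
  qed
  moreover have "k3 \<in> S3" using k3 by (auto simp: S3_def)
  ultimately obtain q where q: "q > 0" "q \<in> S3" and q_dvd: "\<And>z. z \<in> S3 \<Longrightarrow> q dvd z"
    using least_positive_dvd k3(1) by blast
  obtain a where a: "(a, r, 0) \<in> L" using r(2) by (auto simp: S2_def)
  obtain b c where bc: "(b, c, q) \<in> L" using q(2) by (auto simp: S3_def)
  have "(m, 0, 0) \<in> L" "\<And>x. (x, 0, 0) \<in> L \<Longrightarrow> m dvd x" using m(2) m_dvd by (simp_all add: S1_def)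
  moreover have "\<And>x y. (x, y, 0) \<in> L \<Longrightarrow> r dvd y" using r_dvd by (auto simp: S2_def)
  moreover have "\<And>x y z. (x, y, z) \<in> L \<Longrightarrow> q dvd z" using q_dvd by (auto simp: S3_def)
  ultimately show thesis using that[OF m(1) r(1) q(1) _ a bc] by blast
qed

lemma hermite_basis_exists:
  assumes L: "L \<in> L3"
  obtains h where "hermite_basis L h"
proof -
  note reduce = subgroup3_diff_smul[OF L3_subgroup3[OF L]]
  obtain m r q a0 b0 c0 where pos: "0 < m" "0 < r" "0 < q"
    and mem: "(m, 0, 0) \<in> L" "(a0, r, 0) \<in> L" "(b0, c0, q) \<in> L"
    and dvd: "\<And>x. (x, 0, 0) \<in> L \<Longrightarrow> m dvd x" "\<And>x y. (x, y, 0) \<in> L \<Longrightarrow> r dvd y"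
      "\<And>x y z. (x, y, z) \<in> L \<Longrightarrow> q dvd z"
    using L3_diagonal[OF L] by blast
  define a where "a = a0 mod m"
  have a: "(a, r, 0) \<in> L"
    using reduce[OF mem(2) mem(1), of "a0 div m"] by (simp add: a_def minus_div_mult_eq_mod)
  define c where "c = c0 mod r"
  define b1 where "b1 = b0 - c0 div r * a"
  have b1: "(b1, c, q) \<in> L"
    using reduce[OF mem(3) a, of "c0 div r"] by (simp add: b1_def c_def minus_div_mult_eq_mod)
  define b where "b = b1 mod m"
  have b: "(b, c, q) \<in> L"
    using reduce[OF b1 mem(1), of "b1 div m"] by (simp add: b_def minus_div_mult_eq_mod)
  have "hermite_basis L (m, r, q, a, b, c)"
    using pos mem(1) a b dvd by (simp add: hermite_basis_def a_def b_def c_def)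
  then show thesis by (rule that)
qed

lemma triangular_reduce:
  assumes "0 < m" "0 < r" "0 < q"
  obtains c1 c2 c3
  where "p - (smul c1 (m, 0, 0) + smul c2 (a, r, 0) + smul c3 (b, c, q)) \<in> {0..<m} \<times> {0..<r} \<times> {0..<q}"
proof -
  obtain x y z where p: "p = (x, y, z)" by (cases p)
  define c3 where "c3 = z div q"
  define y1 where "y1 = y - c3 * c"
  define c2 where "c2 = y1 div r"
  define x2 where "x2 = x - c3 * b - c2 * a"
  define c1 where "c1 = x2 div m"
  have "p - (smul c1 (m, 0, 0) + smul c2 (a, r, 0) + smul c3 (b, c, q)) = (x2 mod m, y1 mod r, z mod q)"
    by (simp add: p c1_def c2_def c3_def x2_def y1_def minus_div_mult_eq_mod[symmetric] algebra_simps)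
  with assms show thesis by (intro that[of c1 c2 c3]) simp
qed

lemma hermite_basis_small_mem:
  assumes "hermite_basis L (m, r, q, a, b, c)" "(x, y, z) \<in> L" "\<bar>x\<bar> < m" "\<bar>y\<bar> < r" "\<bar>z\<bar> < q"
  shows "(x, y, z) = 0"
proof -
  have small_dvd: "t = 0" if "d dvd t" "\<bar>t\<bar> < d" for d t :: int
    using that dvd_imp_le_int[of t d] by fastforce
  have "q dvd z" using assms(1,2) by (simp add: hermite_basis_def)
  then have z: "z = 0" using small_dvd assms(5) by blast
  then have "r dvd y" using assms(1,2) by (simp add: hermite_basis_def)
  then have y: "y = 0" using small_dvd assms(4) by blast
  then have "m dvd x" using assms(1,2) z by (simp add: hermite_basis_def)
  then have "x = 0" using small_dvd assms(3) by blast
  with y z show ?thesis by (simp add: zero_prod_def)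
qed

lemma hermite_basis_combination_mem:
  assumes "is_subgroup3 L" "hermite_basis L (m, r, q, a, b, c)"
  shows "smul c1 (m, 0, 0) + smul c2 (a, r, 0) + smul c3 (b, c, q) \<in> L"
  using assms by (intro subgroup3_add subgroup3_smul) (simp_all add: hermite_basis_def)

lemma hermite_basis_subset:
  assumes sg: "is_subgroup3 L" "is_subgroup3 L'"
    and h: "hermite_basis L (m, r, q, a, b, c)" "hermite_basis L' (m, r, q, a, b, c)"
  shows "L \<subseteq> L'"
proof
  fix p assume p: "p \<in> L"
  obtain c1 c2 c3
    where box: "p - (smul c1 (m, 0, 0) + smul c2 (a, r, 0) + smul c3 (b, c, q)) \<in> {0..<m} \<times> {0..<r} \<times> {0..<q}"
      (is "p - ?l \<in> _")
    by (rule triangular_reduce[of m r q p a b c]) (use h(1) in \<open>simp_all add: hermite_basis_def\<close>)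
  obtain x y z where xyz: "p - ?l = (x, y, z)" by (cases "p - ?l")
  have "(x, y, z) \<in> L"
    unfolding xyz[symmetric] using subgroup3_diff[OF sg(1) p hermite_basis_combination_mem[OF sg(1) h(1)]] .
  then have "p - ?l = 0" using hermite_basis_small_mem[OF h(1)] box unfolding xyz by auto
  then show "p \<in> L'" using hermite_basis_combination_mem[OF sg(2) h(2)] by simp
qed

lemma hermite_basis_unique:
  assumes "L \<in> L3" "L' \<in> L3" "hermite_basis L h" "hermite_basis L' h"
  shows "L = L'"
  using assms hermite_basis_subset[of L L'] hermite_basis_subset[of L' L] L3_subgroup3
  by (cases h) blast

lemma hermite_basis_card_le_idx:
  assumes L: "L \<in> L3" and h: "hermite_basis L (m, r, q, a, b, c)"
  shows "m * r * q \<le> int (idx L)"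
proof -
  define B where "B = {0..<m} \<times> {0..<r} \<times> {0..<q}"
  have "inj_on (\<lambda>v. coset v L) B"
  proof (rule inj_onI)
    fix v w assume "v \<in> B" "w \<in> B" "coset v L = coset w L"
    moreover obtain v1 v2 v3 w1 w2 w3 where "v = (v1, v2, v3)" "w = (w1, w2, w3)"
      by (cases v, cases w)
    ultimately have "(v1 - w1, v2 - w2, v3 - w3) \<in> L"
        "\<bar>v1 - w1\<bar> < m" "\<bar>v2 - w2\<bar> < r" "\<bar>v3 - w3\<bar> < q"
      using coset_eq_iff[OF L3_subgroup3[OF L]] by (auto simp: B_def)
    then have "(v1 - w1, v2 - w2, v3 - w3) = 0" by (rule hermite_basis_small_mem[OF h])
    then show "v = w" using \<open>v = _\<close> \<open>w = _\<close> by (simp add: zero_prod_def)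
  qed
  moreover have "(\<lambda>v. coset v L) ` B \<subseteq> cosets3 L" by (auto simp: cosets3_eq_range_coset)
  ultimately have "card B \<le> idx L"
    unfolding idx_def using card_inj_on_le L3_finite_cosets[OF L] by blast
  moreover have "int (card B) = m * r * q"
    using h by (simp add: B_def card_cartesian_product hermite_basis_def)
  ultimately show ?thesis by linarith
qed

lemma card_L3_idx_eq_le:
  "finite {L \<in> L3. idx L = n} \<and> card {L \<in> L3. idx L = n} \<le> (n + 1) ^ 6"
proof -
  define S where "S = {L \<in> L3. idx L = n}"
  define I where "I = {0..int n}"
  define g where "g L = (SOME h. hermite_basis L h)" for L
  have g: "hermite_basis L (g L)" if L: "L \<in> L3" for L
  proof -
    obtain h where "hermite_basis L h" by (rule hermite_basis_exists[OF L])
    then show ?thesis unfolding g_def by (rule someI)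
  qed
  have inj: "inj_on g S"
  proof (rule inj_onI)
    fix L L' assume "L \<in> S" "L' \<in> S" "g L = g L'"
    then have "L \<in> L3" "L' \<in> L3" "hermite_basis L' (g L)" using g by (auto simp: S_def)
    then show "L = L'" using hermite_basis_unique g by blast
  qed
  have sub: "g ` S \<subseteq> I \<times> I \<times> I \<times> I \<times> I \<times> I"
  proof
    fix t assume "t \<in> g ` S"
    then obtain L where L: "L \<in> L3" "idx L = n" "t = g L" by (auto simp: S_def)
    obtain m r q a b c where t: "t = (m, r, q, a, b, c)" by (cases t)
    have h: "hermite_basis L (m, r, q, a, b, c)" using g L t by simp
    then have mrq: "m * r * q \<le> int n" using hermite_basis_card_le_idx L by blast
    have pos: "0 < m" "0 < r" "0 < q" "0 \<le> a" "a < m" "0 \<le> b" "b < m" "0 \<le> c" "c < r"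
      using h by (simp_all add: hermite_basis_def)
    have "m * 1 \<le> m * (r * q)" "r * 1 \<le> r * (m * q)" "q * 1 \<le> q * (m * r)"
      using pos by (simp_all add: mult_le_cancel_left1 int_one_le_iff_zero_less)
    then have "m \<le> int n" "r \<le> int n" "q \<le> int n" using mrq by (simp_all add: ac_simps)
    then show "t \<in> I \<times> I \<times> I \<times> I \<times> I \<times> I" using pos by (auto simp: t I_def)
  qed
  have fin: "finite (I \<times> I \<times> I \<times> I \<times> I \<times> I)" by (simp add: I_def)
  have "card I = n + 1" by (simp add: I_def)
  then have "card (I \<times> I \<times> I \<times> I \<times> I \<times> I) = (n + 1) ^ 6"
    by (simp add: card_cartesian_product eval_nat_numeral)
  then show ?thesis
    using card_inj_on_le[OF inj sub fin] inj_on_finite[OF inj sub fin] by (simp add: S_def)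
qed

section \<open>Periodic points\<close>

lemma bit_add_eq_0_iff: "(a::bit) + b = 0 \<longleftrightarrow> a = b"
  by (cases a; cases b) simp_all

lemma bit_add3_eq_0_iff: "(a::bit) + b + c = 0 \<longleftrightarrow> c = a + b"
  by (cases a; cases b; cases c) simp_all

lemma UNIV_bit: "(UNIV :: bit set) = {0, 1}"
  using bit.exhaust by auto

lemma card_le_two_pow_if_determined:
  fixes S :: "('a \<Rightarrow> bit) set"
  assumes D: "finite D"
    and det: "\<And>x y. x \<in> S \<Longrightarrow> y \<in> S \<Longrightarrow> (\<And>p. p \<in> D \<Longrightarrow> x p = y p) \<Longrightarrow> x = y"
  shows "finite S \<and> card S \<le> 2 ^ card D"
proof -
  have inj: "inj_on (\<lambda>x. restrict x D) S"
  proof (rule inj_onI)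
    fix x y assume "x \<in> S" "y \<in> S" and eq: "restrict x D = restrict y D"
    show "x = y"
    proof (rule det[OF \<open>x \<in> S\<close> \<open>y \<in> S\<close>])
      fix p assume "p \<in> D"
      then show "x p = y p" using fun_cong[OF eq, of p] by simp
    qed
  qed
  have sub: "(\<lambda>x. restrict x D) ` S \<subseteq> PiE D (\<lambda>_. UNIV)" by auto
  have fin: "finite (PiE D (\<lambda>_. UNIV :: bit set))" using D by (simp add: finite_PiE UNIV_bit)
  have "card (PiE D (\<lambda>_. UNIV :: bit set)) = 2 ^ card D" using D by (simp add: card_PiE UNIV_bit numeral_2_eq_2)
  then show ?thesis using card_inj_on_le[OF inj sub fin] inj_on_finite[OF inj sub fin] by simp
qed

lemma Xsys_iff: "x \<in> Xsys \<longleftrightarrow> (\<forall>i j k. x (i, j + 1, k) = x (i, j, k) + x (i + 1, j, k))"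
  by (simp add: Xsys_def bit_add3_eq_0_iff)

lemma Xsys_up: "x \<in> Xsys \<Longrightarrow> x (i, j + 1, k) = x (i, j, k) + x (i + 1, j, k)"
  by (simp add: Xsys_iff)

lemma Xsys_add: "x \<in> Xsys \<Longrightarrow> y \<in> Xsys \<Longrightarrow> (\<lambda>p. x p + y p) \<in> Xsys"
  by (simp add: Xsys_iff ac_simps)

definition periodic_points :: "pt set \<Rightarrow> (pt \<Rightarrow> bit) set" where
  "periodic_points L = {x \<in> Xsys. \<forall>n\<in>L. shift n x = x}"

lemma Fix_eq_card_periodic_points: "Fix L = card (periodic_points L)"
  by (simp add: Fix_def periodic_points_def)

lemma periodic_pointsD:
  assumes "x \<in> periodic_points L" "l \<in> L"
  shows "x (p + l) = x p"
proof -
  have "shift l x = x" using assms by (simp add: periodic_points_def)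
  from fun_cong[OF this, of p] show ?thesis by (simp add: shift_def)
qed

lemma zero_in_periodic_points: "(\<lambda>_. 0) \<in> periodic_points L"
  by (simp add: periodic_points_def Xsys_def shift_def)

lemma periodic_points_add:
  assumes x: "x \<in> periodic_points L" and y: "y \<in> periodic_points L"
  shows "(\<lambda>p. x p + y p) \<in> periodic_points L"
proof -
  have "(\<lambda>p. x p + y p) \<in> Xsys" using x y by (simp add: periodic_points_def Xsys_add)
  moreover have "shift n (\<lambda>p. x p + y p) = (\<lambda>p. x p + y p)" if "n \<in> L" for n
    using periodic_pointsD[OF x that] periodic_pointsD[OF y that] by (simp add: shift_def)
  ultimately show ?thesis by (simp add: periodic_points_def)
qed

text \<open>The relation propagates the rows upwards, and every point is congruent modulo L to one with
  0 \<le> j < r and 0 \<le> k < q.\<close>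
lemma periodic_point_eq_0:
  assumes sg: "is_subgroup3 L" and h: "hermite_basis L (m, r, q, a, b, c)"
    and z: "z \<in> periodic_points L" and rows: "\<And>i k. 0 \<le> k \<Longrightarrow> k < q \<Longrightarrow> z (i, 0, k) = 0"
  shows "z p = 0"
proof -
  have zX: "z \<in> Xsys" using z by (simp add: periodic_points_def)
  have up: "z (i, int j, k) = 0" if "0 \<le> k" "k < q" for i j k
  proof (induction j arbitrary: i)
    case 0
    show ?case using rows that by simp
  next
    case (Suc j)
    show ?case using Xsys_up[OF zX, of i "int j" k] Suc by (simp add: add.commute)
  qed
  obtain c1 c2 c3
    where box: "p - (smul c1 (m, 0, 0) + smul c2 (a, r, 0) + smul c3 (b, c, q)) \<in> {0..<m} \<times> {0..<r} \<times> {0..<q}"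
      (is "p - ?l \<in> _")
    by (rule triangular_reduce[of m r q p a b c]) (use h in \<open>simp_all add: hermite_basis_def\<close>)
  obtain x y k where xyk: "p - ?l = (x, y, k)" by (cases "p - ?l")
  have "z p = z ((x, y, k) + ?l)" using xyk by (metis diff_add_cancel)
  also have "\<dots> = z (x, y, k)" by (rule periodic_pointsD[OF z hermite_basis_combination_mem[OF sg h]])
  also have "\<dots> = 0" using up[of k x "nat y"] xyk box by simp
  finally show ?thesis .
qed

lemma vanishes_by_recursion:
  fixes v :: "int \<Rightarrow> bit"
  assumes init: "\<And>i. 0 \<le> i \<Longrightarrow> i < w \<Longrightarrow> v i = 0"
    and step: "\<And>n. w \<le> n \<Longrightarrow> \<exists>a b. 0 \<le> a \<and> a < n \<and> 0 \<le> b \<and> b < n \<and> v n = v a + v b"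
    and n: "0 \<le> n"
  shows "v n = 0"
proof -
  have "v (int k) = 0" for k
  proof (induction k rule: less_induct)
    case (less k)
    show ?case
    proof (cases "int k < w")
      case True
      then show ?thesis using init by simp
    next
      case False
      then have "w \<le> int k" by simp
      then obtain a b where "0 \<le> a" "a < int k" "0 \<le> b" "b < int k" "v (int k) = v a + v b"
        using step by blast
      moreover have "v a = 0" "v b = 0"
        using less[of "nat a"] less[of "nat b"] calculation by simp_all
      ultimately show ?thesis by simp
    qed
  qed
  from this[of "nat n"] show ?thesis using n by simp
qed

lemma periodic_eq_mod:
  fixes v :: "int \<Rightarrow> 'a"
  assumes per: "\<And>i. v (i + m) = v i"
  shows "v i = v (i mod m)"
proof -
  have nat: "v (j + int k * m) = v j" for j k
  proof (induction k)
    case (Suc k)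
    then show ?case using per[of "j + int k * m"] by (simp add: algebra_simps)
  qed simp
  have "v (j + c * m) = v j" for j c
  proof (cases "c \<ge> 0")
    case True
    then show ?thesis using nat[of j "nat c"] by simp
  next
    case False
    then show ?thesis using nat[of "j + c * m" "nat (- c)"] by simp
  qed
  from this[of "i mod m" "i div m"] show ?thesis by simp
qed

text \<open>Number of initial values determining an m-periodic solution of v i + v (i+1) + v (i+s) = 0.\<close>
definition recurrence_bound :: "int \<Rightarrow> int \<Rightarrow> int" where
  "recurrence_bound m s = (if s = 1 then 0 else min s (m - s + 1))"

lemma recurrence_bound_le:
  "1 \<le> s \<Longrightarrow> s \<le> m \<Longrightarrow> 0 \<le> recurrence_bound m s \<and> 3 * recurrence_bound m s \<le> 2 * m"
  unfolding recurrence_bound_def min_def by (auto split: if_split)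

lemma periodic_recurrence_eq_0:
  fixes v :: "int \<Rightarrow> bit"
  assumes s: "1 \<le> s" "s \<le> m" and per: "\<And>i. v (i + m) = v i"
    and rec: "\<And>i. v i + v (i + 1) + v (i + s) = 0"
    and init: "\<And>i. 0 \<le> i \<Longrightarrow> i < recurrence_bound m s \<Longrightarrow> v i = 0"
  shows "v i = 0"
proof (cases "s = 1")
  case True
  then show ?thesis using rec[of i] by (simp add: add.assoc)
next
  case False
  have nonneg: "v n = 0" if "0 \<le> n" for n
  proof (rule vanishes_by_recursion[OF init _ that])
    fix n assume n: "recurrence_bound m s \<le> n"
    show "\<exists>a b. 0 \<le> a \<and> a < n \<and> 0 \<le> b \<and> b < n \<and> v n = v a + v b"
    proof (cases "s \<le> m - s + 1")
      case True
      have "v n = v (n - s) + v (n - s + 1)"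
        using rec[of "n - s"] by (simp add: eq_neg_iff_add_eq_0[symmetric])
      moreover have "s \<le> n" using n True False by (simp add: recurrence_bound_def)
      ultimately show ?thesis using s False
        by (intro exI[of _ "n - s"] exI[of _ "n - s + 1"] conjI) (assumption | linarith)+
    next
      case F: False
      have "v (n - 1) + v n + v (n - 1 + s - m) = 0"
        using rec[of "n - 1"] per[of "n - 1 + s - m"] by simp
      then have "v n = v (n - 1) + v (n - 1 + s - m)"
        by (cases "v n"; cases "v (n - 1)"; cases "v (n - 1 + s - m)") simp_all
      moreover have "m - s + 1 \<le> n" using n F False by (simp add: recurrence_bound_def)
      ultimately show ?thesis using s
        by (intro exI[of _ "n - 1"] exI[of _ "n - 1 + s - m"] conjI) (assumption | linarith)+
    qed
  qed
  have "v i = v (i mod m)" by (rule periodic_eq_mod) (rule per)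
  also have "\<dots> = 0" using nonneg s by simp
  finally show ?thesis .
qed

text \<open>The rows j = 0 of a periodic point are m-periodic, and when r = 1 the period vector
  (a, 1, 0) turns the defining relation into a recurrence along the row.\<close>
lemma hermite_row_rank:
  assumes h: "hermite_basis L (m, r, q, a, b, c)"
  obtains w where "0 \<le> w" "3 * w \<le> 2 * m * r"
    "\<And>z i k. z \<in> periodic_points L \<Longrightarrow> (\<And>i. 0 \<le> i \<Longrightarrow> i < w \<Longrightarrow> z (i, 0, k) = 0) \<Longrightarrow>
      z (i, 0, k) = 0"
proof -
  have row_per: "z (i + m, 0, k) = z (i, 0, k)" if "z \<in> periodic_points L" for z i k
    using periodic_pointsD[OF that, of "(m, 0, 0)" "(i, 0, k)"] h by (simp add: hermite_basis_def)
  show thesis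
  proof (cases "r = 1")
    case False
    then have "2 \<le> r" "0 < m" using h by (simp_all add: hermite_basis_def)
    show thesis
    proof (rule that[of m])
      show "0 \<le> m" using \<open>0 < m\<close> by simp
      have "m * 3 \<le> m * (2 * r)" using \<open>2 \<le> r\<close> \<open>0 < m\<close> by (intro mult_left_mono) simp_all
      then show "3 * m \<le> 2 * m * r" by (simp add: ac_simps)
    next
      fix z i k assume z: "z \<in> periodic_points L"
        and init: "\<And>i. 0 \<le> i \<Longrightarrow> i < m \<Longrightarrow> z (i, 0, k) = 0"
      have "z (i, 0, k) = z (i mod m, 0, k)"
        using periodic_eq_mod[of "\<lambda>i. z (i, 0, k)" m i] row_per[OF z] by simp
      also have "\<dots> = 0" using init \<open>0 < m\<close> by simp
      finally show "z (i, 0, k) = 0" .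
    qed
  next
    case True
    define s where "s = m - a"
    have s: "1 \<le> s" "s \<le> m" using h by (simp_all add: s_def hermite_basis_def)
    have a: "(a, 1, 0) \<in> L" using h True by (simp add: hermite_basis_def)
    show thesis
    proof (rule that[of "recurrence_bound m s"])
      show "0 \<le> recurrence_bound m s" "3 * recurrence_bound m s \<le> 2 * m * r"
        using recurrence_bound_le[OF s] True by simp_all
    next
      fix z i k assume z: "z \<in> periodic_points L"
        and init: "\<And>i. 0 \<le> i \<Longrightarrow> i < recurrence_bound m s \<Longrightarrow> z (i, 0, k) = 0"
      have up: "z (i, 1, k) = z (i + s, 0, k)" for i
      proof -
        have "z (i, 1, k) = z ((i - a, 0, k) + (a, 1, 0))" by simp
        also have "\<dots> = z (i - a, 0, k)" by (rule periodic_pointsD[OF z a])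
        also have "\<dots> = z (i + s, 0, k)" using row_per[OF z, of "i - a" k] by (simp add: s_def algebra_simps)
        finally show ?thesis .
      qed
      have zX: "z \<in> Xsys" using z by (simp add: periodic_points_def)
      have rec: "z (i, 0, k) + z (i + 1, 0, k) + z (i + s, 0, k) = 0" for i
        using Xsys_up[OF zX, of i 0 k] up[of i] by (simp add: bit_add3_eq_0_iff)
      show "z (i, 0, k) = 0"
        by (rule periodic_recurrence_eq_0[OF s, of "\<lambda>i. z (i, 0, k)"]) (use row_per[OF z] rec init in simp_all)
    qed
  qed
qed

lemma card_periodic_points_le:
  assumes L: "L \<in> L3"
  obtains w :: nat where "finite (periodic_points L)" "card (periodic_points L) \<le> 2 ^ w" "3 * w \<le> 2 * idx L"
proof -
  have sg: "is_subgroup3 L" using L by (rule L3_subgroup3)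
  obtain h where "hermite_basis L h" by (rule hermite_basis_exists[OF L])
  moreover obtain m r q a b c where "h = (m, r, q, a, b, c)" by (cases h)
  ultimately have h: "hermite_basis L (m, r, q, a, b, c)" by simp
  obtain w where w: "0 \<le> w" "3 * w \<le> 2 * m * r"
    and rows: "\<And>z i k. z \<in> periodic_points L \<Longrightarrow>
      (\<And>i. 0 \<le> i \<Longrightarrow> i < w \<Longrightarrow> z (i, 0, k) = 0) \<Longrightarrow> z (i, 0, k) = 0"
    using hermite_row_rank[OF h] by blast
  define D where "D = {0..<w} \<times> {0::int} \<times> {0..<q}"
  have "finite (periodic_points L) \<and> card (periodic_points L) \<le> 2 ^ card D"
  proof (rule card_le_two_pow_if_determined)
    show "finite D" by (simp add: D_def)
  next
    fix x y assume x: "x \<in> periodic_points L" and y: "y \<in> periodic_points L"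
      and agree: "\<And>p. p \<in> D \<Longrightarrow> x p = y p"
    define z where "z p = x p + y p" for p
    have z: "z \<in> periodic_points L" using periodic_points_add[OF x y] by (simp add: z_def[abs_def])
    have "z (i, 0, k) = 0" if "0 \<le> k" "k < q" for i k
      by (rule rows[OF z]) (use agree that in \<open>simp add: z_def D_def bit_add_eq_0_iff\<close>)
    then have "z p = 0" for p by (rule periodic_point_eq_0[OF sg h z])
    then show "x = y" by (simp add: fun_eq_iff z_def bit_add_eq_0_iff)
  qed
  moreover have "3 * card D \<le> 2 * idx L"
  proof -
    have "3 * w * q \<le> 2 * m * r * q" using w(2) h by (intro mult_right_mono) (simp_all add: hermite_basis_def)
    also have "\<dots> \<le> 2 * int (idx L)" using hermite_basis_card_le_idx[OF L h] by simp
    finally have "3 * w * q \<le> 2 * int (idx L)" .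
    moreover have "int (card D) = w * q" using w(1) h by (simp add: D_def card_cartesian_product hermite_basis_def)
    ultimately show ?thesis by simp
  qed
  ultimately show thesis using that by blast
qed

lemma finite_periodic_points: "L \<in> L3 \<Longrightarrow> finite (periodic_points L)"
  by (rule card_periodic_points_le)

lemma Fix_pos: "L \<in> L3 \<Longrightarrow> 0 < Fix L"
  using finite_periodic_points zero_in_periodic_points
  unfolding Fix_eq_card_periodic_points by (auto simp: card_gt_0_iff)

lemma Fix_le_powr:
  assumes "L \<in> L3"
  shows "real (Fix L) \<le> 2 powr (2 / 3 * real (idx L))"
proof -
  obtain w where w: "card (periodic_points L) \<le> 2 ^ w" "3 * w \<le> 2 * idx L"
    by (rule card_periodic_points_le[OF assms])
  have "real (Fix L) \<le> 2 powr real w"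
    using w(1) unfolding Fix_eq_card_periodic_points by (simp add: powr_realpow flip: of_nat_le_iff)
  also have "\<dots> \<le> 2 powr (2 / 3 * real (idx L))" using w(2) by (intro powr_mono) linarith+
  finally show ?thesis .
qed

section \<open>A subgroup with many periodic points\<close>

definition diag_lattice :: "nat \<Rightarrow> pt set" where
  "diag_lattice N = {(i, j, k). 3 dvd i - j \<and> int N dvd k}"

lemma diag_lattice_subgroup: "is_subgroup3 (diag_lattice N)"
proof -
  have "3 dvd (i + i') - (j + j')" if "3 dvd i - j" "3 dvd i' - j'" for i j i' j' :: int
    using dvd_add[OF that] by (simp add: algebra_simps)
  moreover have "3 dvd - i - - j" if "3 dvd i - j" for i j :: int
    using that by (simp add: dvd_diff_commute)
  ultimately show ?thesis
    by (auto simp: is_subgroup3_def diag_lattice_def zero_prod_def)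
qed

lemma cosets3_diag_lattice:
  assumes "0 < N"
  shows "cosets3 (diag_lattice N) \<subseteq> (\<lambda>(a, c). coset (a, 0, c) (diag_lattice N)) ` ({0..<3} \<times> {0..<int N})"
proof
  fix C assume "C \<in> cosets3 (diag_lattice N)"
  then obtain i j k where C: "C = coset (i, j, k) (diag_lattice N)" by (auto simp: cosets3_eq_range_coset)
  have "3 dvd i - j - (i - j) mod 3" "int N dvd k - k mod int N" by (simp_all add: mod_eq_dvd_iff)
  then have "(i, j, k) - ((i - j) mod 3, 0, k mod int N) \<in> diag_lattice N"
    by (simp add: diag_lattice_def algebra_simps)
  then have "C = coset ((i - j) mod 3, 0, k mod int N) (diag_lattice N)"
    unfolding C by (simp add: coset_eq_iff[OF diag_lattice_subgroup])
  with assms show "C \<in> (\<lambda>(a, c). coset (a, 0, c) (diag_lattice N)) ` ({0..<3} \<times> {0..<int N})"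
    by force
qed

lemma hermite_basis_diag_lattice: "0 < N \<Longrightarrow> hermite_basis (diag_lattice N) (3, 1, int N, 1, 0, 0)"
  by (auto simp: hermite_basis_def diag_lattice_def)

lemma diag_lattice_L3: "0 < N \<Longrightarrow> diag_lattice N \<in> L3"
  unfolding L3_def using diag_lattice_subgroup finite_subset[OF cosets3_diag_lattice] by simp

lemma idx_diag_lattice:
  assumes "0 < N"
  shows "idx (diag_lattice N) = 3 * N"
proof (rule antisym)
  have "idx (diag_lattice N) \<le> card ((\<lambda>(a, c). coset (a, 0, c) (diag_lattice N)) ` ({0..<3} \<times> {0..<int N}))"
    unfolding idx_def by (rule card_mono[OF _ cosets3_diag_lattice[OF assms]]) simp
  also have "\<dots> \<le> card ({0..<3::int} \<times> {0..<int N})" by (rule card_image_le) simp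
  finally show "idx (diag_lattice N) \<le> 3 * N" by (simp add: card_cartesian_product)
  show "3 * N \<le> idx (diag_lattice N)"
    using hermite_basis_card_le_idx[OF diag_lattice_L3 hermite_basis_diag_lattice, OF assms assms] by simp
qed

text \<open>On each diagonal class i - j mod 3 the values u, v, u + v solve the defining relation, and
  every residue class of k mod N carries its own pair (u, v).\<close>
definition diag_point :: "nat \<Rightarrow> (int \<Rightarrow> bit \<times> bit) \<Rightarrow> pt \<Rightarrow> bit" where
  "diag_point N \<phi> = (\<lambda>(i, j, k). case \<phi> (k mod int N) of (u, v) \<Rightarrow> [u, v, u + v] ! nat ((i - j) mod 3))"

lemma diag_point_periodic: "diag_point N \<phi> \<in> periodic_points (diag_lattice N)"
proof -
  have three: "[u, v, u + v] ! nat ((i - j) mod 3) + [u, v, u + v] ! nat ((i + 1 - j) mod 3)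
      + [u, v, u + v] ! nat ((i - (j + 1)) mod 3) = 0" for u v :: bit and i j :: int
  proof -
    have "(i - j) mod 3 = 0 \<and> (i + 1 - j) mod 3 = 1 \<and> (i - (j + 1)) mod 3 = 2 \<or>
        (i - j) mod 3 = 1 \<and> (i + 1 - j) mod 3 = 2 \<and> (i - (j + 1)) mod 3 = 0 \<or>
        (i - j) mod 3 = 2 \<and> (i + 1 - j) mod 3 = 0 \<and> (i - (j + 1)) mod 3 = 1"
      by presburger
    then show ?thesis by (elim disjE conjE) (cases u; cases v; simp)+
  qed
  have "diag_point N \<phi> \<in> Xsys"
    unfolding Xsys_def
  proof (intro CollectI allI)
    fix i j k
    obtain u v where "\<phi> (k mod int N) = (u, v)" by (cases "\<phi> (k mod int N)")
    then show "diag_point N \<phi> (i, j, k) + diag_point N \<phi> (i + 1, j, k) + diag_point N \<phi> (i, j + 1, k) = 0"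
      using three[of u v i j] by (simp add: diag_point_def)
  qed
  moreover have "diag_point N \<phi> (p + l) = diag_point N \<phi> p" if l_mem: "l \<in> diag_lattice N" for p l
  proof -
    obtain i j k i' j' k' where p: "p = (i, j, k)" and l: "l = (i', j', k')" by (cases p, cases l)
    obtain s t where "i' - j' = 3 * s" "k' = int N * t" using l_mem by (auto simp: l diag_lattice_def elim!: dvdE)
    then have e: "k + k' = k + t * int N" "i + i' - (j + j') = (i - j) + s * 3" by simp_all
    have "(k + k') mod int N = k mod int N" "(i + i' - (j + j')) mod 3 = (i - j) mod 3"
      unfolding e by simp_all
    then show ?thesis by (simp add: p l diag_point_def)
  qed
  ultimately show ?thesis by (simp add: periodic_points_def shift_def fun_eq_iff)
qed

lemma Fix_diag_lattice:
  assumes "0 < N"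
  shows "4 ^ N \<le> Fix (diag_lattice N)"
proof -
  define P where "P = PiE {0..<int N} (\<lambda>_. UNIV :: (bit \<times> bit) set)"
  have "card (UNIV :: (bit \<times> bit) set) = 4"
    by (simp add: UNIV_Times_UNIV[symmetric] card_cartesian_product UNIV_bit del: UNIV_Times_UNIV)
  then have "card P = 4 ^ N" by (simp add: P_def card_PiE)
  have "inj_on (diag_point N) P"
  proof (rule inj_onI)
    fix \<phi> \<psi> assume \<phi>: "\<phi> \<in> P" and \<psi>: "\<psi> \<in> P" and eq: "diag_point N \<phi> = diag_point N \<psi>"
    show "\<phi> = \<psi>"
    proof (rule PiE_ext[OF \<phi>[unfolded P_def] \<psi>[unfolded P_def]])
      fix c assume c: "c \<in> {0..<int N}"
      have "diag_point N \<phi> (0, 0, c) = diag_point N \<psi> (0, 0, c)" "diag_point N \<phi> (1, 0, c) = diag_point N \<psi> (1, 0, c)"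
        using eq by simp_all
      then show "\<phi> c = \<psi> c" using c by (simp add: diag_point_def prod_eq_iff split: prod.splits)
    qed
  qed
  moreover have "diag_point N ` P \<subseteq> periodic_points (diag_lattice N)" using diag_point_periodic by auto
  moreover have "finite (periodic_points (diag_lattice N))"
    using diag_lattice_L3[OF assms] by (rule finite_periodic_points)
  ultimately have "card P \<le> Fix (diag_lattice N)"
    unfolding Fix_eq_card_periodic_points by (rule card_inj_on_le)
  with \<open>card P = 4 ^ N\<close> show ?thesis by simp
qed

section \<open>The growth rate\<close>

lemma ln_Fix_le:
  assumes "L \<in> L3"
  shows "ln (real (Fix L)) \<le> 2 / 3 * ln 2 * real (idx L)"
proof -
  have "ln (real (Fix L)) \<le> ln (2 powr (2 / 3 * real (idx L)))"
    using Fix_pos[OF assms] Fix_le_powr[OF assms] by (subst ln_le_cancel_iff) auto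
  then show ?thesis by (simp add: ln_powr ac_simps)
qed

lemma ln_Fix_diag_lattice_ge:
  assumes "0 < N"
  shows "2 / 3 * ln 2 \<le> ln (real (Fix (diag_lattice N))) / real (idx (diag_lattice N))"
proof -
  have "real N * ln 4 = ln (4 ^ N)" by (simp add: ln_realpow)
  also have "\<dots> \<le> ln (real (Fix (diag_lattice N)))"
  proof -
    have "real (4 ^ N) \<le> real (Fix (diag_lattice N))"
      using Fix_diag_lattice[OF assms] by (simp only: of_nat_le_iff)
    then show ?thesis using Fix_pos[OF diag_lattice_L3[OF assms]] by (subst ln_le_cancel_iff) auto
  qed
  finally have "real N * (2 * ln 2) \<le> ln (real (Fix (diag_lattice N)))"
    using ln_realpow[of 2 2] by simp
  with assms show ?thesis by (simp add: idx_diag_lattice field_simps)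
qed

lemma eventually_index_filter:
  "eventually P index_filter \<longleftrightarrow> (\<exists>N. \<forall>L\<in>L3. N \<le> idx L \<longrightarrow> P L)"
proof -
  have "eventually P index_filter \<longleftrightarrow> (\<exists>N\<in>UNIV. eventually P (principal {L \<in> L3. N \<le> idx L}))"
    unfolding index_filter_def
  proof (rule eventually_INF_base)
    fix a b :: nat
    show "\<exists>N\<in>UNIV. principal {L \<in> L3. N \<le> idx L}
        \<le> inf (principal {L \<in> L3. a \<le> idx L}) (principal {L \<in> L3. b \<le> idx L})"
      by (intro bexI[of _ "max a b"]) auto
  qed simp
  then show ?thesis by (simp add: eventually_principal imp_conjL Ball_def)
qed

lemma growth_le: "growth \<le> ereal (2 / 3 * ln 2)"
  unfolding growth_def
proof (rule Limsup_bounded)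
  show "\<forall>\<^sub>F L in index_filter. ereal (ln (real (Fix L)) / real (idx L)) \<le> ereal (2 / 3 * ln 2)"
    unfolding eventually_index_filter
  proof (intro exI[of _ 1] ballI impI)
    fix L assume "L \<in> L3" "1 \<le> idx L"
    then show "ereal (ln (real (Fix L)) / real (idx L)) \<le> ereal (2 / 3 * ln 2)"
      using ln_Fix_le[of L] by (simp add: divide_le_eq)
  qed
qed

lemma growth_ge: "ereal (2 / 3 * ln 2) \<le> growth"
  unfolding growth_def Limsup_def
proof (rule INF_greatest)
  fix P assume "P \<in> {P. eventually P index_filter}"
  then obtain N where N: "\<And>L. L \<in> L3 \<Longrightarrow> N \<le> idx L \<Longrightarrow> P L"
    unfolding eventually_index_filter by auto
  define L where "L = diag_lattice (Suc N)"
  have "P L" using N diag_lattice_L3 idx_diag_lattice by (simp add: L_def)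
  have "ereal (2 / 3 * ln 2) \<le> ereal (ln (real (Fix L)) / real (idx L))"
    using ln_Fix_diag_lattice_ge[of "Suc N"] by (simp add: L_def)
  also have "\<dots> \<le> (SUP L\<in>{L. P L}. ereal (ln (real (Fix L)) / real (idx L)))"
    using \<open>P L\<close> by (intro SUP_upper) simp
  finally show "ereal (2 / 3 * ln 2) \<le> (SUP L\<in>{L. P L}. ereal (ln (real (Fix L)) / real (idx L)))" .
qed

section \<open>The radius of convergence\<close>

lemma fps_power_nth_nonneg:
  fixes A :: "'a :: linordered_semidom fps"
  assumes "\<And>n. 0 \<le> fps_nth A n"
  shows "0 \<le> fps_nth (A ^ i) n"
proof (induction i arbitrary: n)
  case (Suc i)
  then show ?case by (simp add: fps_mult_nth assms sum_nonneg)
qed simp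

lemma fps_exp_compose_nth: "fps_nth (fps_exp 1 oo A) n = (\<Sum>i=0..n. fps_nth (A ^ i) n / fact i)"
  for A :: "'a :: field_char_0 fps"
  by (simp add: fps_compose_nth)

lemma fps_exp_compose_nth_ge:
  fixes A :: "real fps"
  assumes nonneg: "\<And>n. 0 \<le> fps_nth A n" and "0 < n"
  shows "fps_nth A n \<le> fps_nth (fps_exp 1 oo A) n"
proof -
  have "fps_nth (A ^ 1) n / fact 1 \<le> (\<Sum>i=0..n. fps_nth (A ^ i) n / fact i)"
    using assms by (intro member_le_sum) (auto intro!: divide_nonneg_nonneg fps_power_nth_nonneg)
  then show ?thesis by (simp add: fps_exp_compose_nth)
qed

text \<open>The partial sums of the exponential series of nonnegative terms are bounded by exp (A r).\<close>
lemma summable_fps_exp_compose: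
  fixes A :: "real fps"
  assumes nonneg: "\<And>n. 0 \<le> fps_nth A n" and r: "0 \<le> r" "ereal r < fps_conv_radius A"
  shows "summable (\<lambda>n. fps_nth (fps_exp 1 oo A) n * r ^ n)"
proof (rule summableI_nonneg_bounded)
  define a where "a i n = fps_nth (A ^ i) n * r ^ n" for i n
  have a_nonneg: "0 \<le> a i n" for i n
    using fps_power_nth_nonneg[OF nonneg] r by (simp add: a_def)
  have rad: "ereal (norm r) < fps_conv_radius A" using r by simp
  have sums: "(a i) sums (eval_fps A r ^ i)" for i
  proof -
    have "ereal (norm r) < fps_conv_radius (A ^ i)"
      using rad fps_conv_radius_power[of A i] by (rule order_less_le_trans)
    then have "summable (a i)"
      unfolding a_def fps_conv_radius_def by (rule summable_in_conv_radius)
    moreover have "suminf (a i) = eval_fps A r ^ i"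
      using eval_fps_power[OF rad, of i] by (simp add: a_def[abs_def] eval_fps_def)
    ultimately show ?thesis by (simp add: sums_iff)
  qed
  have partial: "sum (a i) {..<M} \<le> eval_fps A r ^ i" for i M
    using sum_le_suminf[of "a i" "{..<M}"] sums[of i] a_nonneg by (simp add: sums_iff)
  fix M
  have "(\<Sum>n<M. fps_nth (fps_exp 1 oo A) n * r ^ n) = (\<Sum>n<M. \<Sum>i=0..n. a i n / fact i)"
    by (simp add: fps_exp_compose_nth a_def sum_distrib_right)
  also have "\<dots> \<le> (\<Sum>n<M. \<Sum>i<M. a i n / fact i)"
    by (intro sum_mono sum_mono2) (auto simp: a_nonneg)
  also have "\<dots> = (\<Sum>i<M. (\<Sum>n<M. a i n) / fact i)"
    by (subst sum.swap) (simp add: sum_divide_distrib)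
  also have "\<dots> \<le> (\<Sum>i<M. eval_fps A r ^ i / fact i)"
    by (intro sum_mono divide_right_mono partial) simp
  also have "\<dots> \<le> exp (eval_fps A r)"
  proof -
    have "0 \<le> suminf (a 1)" using sums[of 1] a_nonneg by (intro suminf_nonneg) (auto simp: sums_iff)
    then have "0 \<le> eval_fps A r" using sums[of 1] by (simp add: sums_iff)
    then have "(\<Sum>i<M. inverse (fact i) * eval_fps A r ^ i) \<le> (\<Sum>i. inverse (fact i) * eval_fps A r ^ i)"
      by (intro sum_le_suminf[OF summable_exp]) auto
    then show ?thesis by (simp add: exp_def divide_inverse mult.commute)
  qed
  finally show "(\<Sum>n<M. fps_nth (fps_exp 1 oo A) n * r ^ n) \<le> exp (eval_fps A r)" .
qed (use r fps_power_nth_nonneg[OF nonneg] in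
      \<open>auto simp: fps_exp_compose_nth intro!: mult_nonneg_nonneg sum_nonneg divide_nonneg_nonneg\<close>)

lemma conv_radius_le_of_eventually_le:
  fixes f g :: "nat \<Rightarrow> 'a :: {banach, real_normed_div_algebra}"
  assumes "eventually (\<lambda>n. norm (g n) \<le> norm (f n)) sequentially"
  shows "conv_radius f \<le> conv_radius g"
proof (rule conv_radius_geI_ex')
  fix r :: real assume "0 < r" "ereal r < conv_radius f"
  then have f: "summable (\<lambda>n. norm (f n * of_real r ^ n))" by (intro abs_summable_in_conv_radius) simp
  obtain N where N: "\<And>n. n \<ge> N \<Longrightarrow> norm (g n) \<le> norm (f n)"
    using assms by (auto simp: eventually_sequentially)
  show "summable (\<lambda>n. g n * of_real r ^ n)"
    by (rule summable_comparison_test'[OF f, of N]) (simp add: norm_mult mult_right_mono N)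
qed

lemma fps_conv_radius_exp_compose:
  fixes A :: "real fps"
  assumes nonneg: "\<And>n. 0 \<le> fps_nth A n"
  shows "fps_conv_radius (fps_exp 1 oo A) = fps_conv_radius A"
proof (rule antisym)
  show "fps_conv_radius (fps_exp 1 oo A) \<le> fps_conv_radius A"
    unfolding fps_conv_radius_def
  proof (intro conv_radius_le_of_eventually_le eventually_mono[OF eventually_gt_at_top[of 0]])
    fix n :: nat assume "0 < n"
    then show "norm (fps_nth A n) \<le> norm (fps_nth (fps_exp 1 oo A) n)"
      using fps_exp_compose_nth_ge[OF nonneg, of n] nonneg[of n] by simp
  qed
  show "fps_conv_radius A \<le> fps_conv_radius (fps_exp 1 oo A)"
    unfolding fps_conv_radius_def
    by (rule conv_radius_geI_ex') (use summable_fps_exp_compose[OF nonneg] in \<open>simp add: fps_conv_radius_def\<close>)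
qed

lemma conv_radius_poly_times_power:
  assumes "0 < c"
  shows "conv_radius (\<lambda>n. (real n + 1) ^ k * c ^ n) = ereal (1 / c)"
proof -
  have "conv_radius (\<lambda>n. (real n + 1) ^ k) = 1"
  proof (rule conv_radius_ratio_limit_nonzero[of _ 1])
    have "(\<lambda>n. (real n + 1) ^ k / (real (Suc n) + 1) ^ k) \<longlonglongrightarrow> 1" by real_asymp
    then show "(\<lambda>n. norm ((real n + 1) ^ k) / norm ((real (Suc n) + 1) ^ k)) \<longlonglongrightarrow> 1" by simp
  qed simp_all
  then show ?thesis using conv_radius_mult_power_right[of c "\<lambda>n. (real n + 1) ^ k"] assms
    by (simp add: one_ereal_def)
qed

lemma logzeta_nth: "fps_nth logzeta_fps n = (\<Sum>L\<in>{L \<in> L3. idx L = n}. real (Fix L) / real (idx L))"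
  by (simp add: logzeta_fps_def)

lemma logzeta_nth_nonneg: "0 \<le> fps_nth logzeta_fps n"
  unfolding logzeta_nth by (intro sum_nonneg) simp

lemma logzeta_nth_le: "fps_nth logzeta_fps n \<le> (real n + 1) ^ 6 * (2 powr (2 / 3)) ^ n"
proof -
  have bound: "real (Fix L) / real (idx L) \<le> (2 powr (2 / 3)) ^ n" if "L \<in> {L \<in> L3. idx L = n}" for L
  proof -
    have L: "L \<in> L3" "idx L = n" using that by auto
    have "real (Fix L) / real (idx L) \<le> real (Fix L)" by (simp add: divide_le_eq mult_le_cancel_left1)
    also have "\<dots> \<le> 2 powr (2 / 3 * real n)" using Fix_le_powr[OF L(1)] L(2) by simp
    also have "\<dots> = (2 powr (2 / 3)) ^ n" by (simp add: powr_powr powr_realpow[symmetric] mult.commute)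
    finally show ?thesis .
  qed
  have "fps_nth logzeta_fps n \<le> real (card {L \<in> L3. idx L = n}) * (2 powr (2 / 3)) ^ n"
    unfolding logzeta_nth by (rule sum_bounded_above) (rule bound)
  also have "\<dots> \<le> (real n + 1) ^ 6 * (2 powr (2 / 3)) ^ n"
  proof (rule mult_right_mono)
    have "real (card {L \<in> L3. idx L = n}) \<le> real ((n + 1) ^ 6)"
      using card_L3_idx_eq_le[of n] by (simp only: of_nat_le_iff)
    then show "real (card {L \<in> L3. idx L = n}) \<le> (real n + 1) ^ 6" by (simp add: add.commute)
  qed simp
  finally show ?thesis .
qed

lemma logzeta_nth_ge:
  assumes "0 < N"
  shows "4 ^ N / (3 * real N) \<le> fps_nth logzeta_fps (3 * N)"
proof -
  have "4 ^ N / (3 * real N) \<le> real (Fix (diag_lattice N)) / real (idx (diag_lattice N))"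
  proof -
    have "real (4 ^ N) \<le> real (Fix (diag_lattice N))"
      using Fix_diag_lattice[OF assms] by (simp only: of_nat_le_iff)
    then show ?thesis using assms by (simp add: idx_diag_lattice divide_right_mono)
  qed
  also have "\<dots> \<le> fps_nth logzeta_fps (3 * N)"
    unfolding logzeta_nth using assms diag_lattice_L3 idx_diag_lattice card_L3_idx_eq_le
    by (intro member_le_sum) auto
  finally show ?thesis .
qed

text \<open>Past 2^(-2/3) the terms with index 3N grow like (4 r^3)^N / (3N).\<close>
lemma logzeta_not_summable:
  assumes r: "2 powr (-2 / 3) < r"
  shows "\<not> summable (\<lambda>n. fps_nth logzeta_fps n * r ^ n)"
proof
  assume "summable (\<lambda>n. fps_nth logzeta_fps n * r ^ n)"
  then have "(\<lambda>n. fps_nth logzeta_fps n * r ^ n) \<longlonglongrightarrow> 0" by (rule summable_LIMSEQ_zero)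
  then have "(\<lambda>N. fps_nth logzeta_fps (3 * N) * r ^ (3 * N)) \<longlonglongrightarrow> 0"
    by (rule LIMSEQ_subseq_LIMSEQ[unfolded comp_def]) (simp add: strict_mono_def)
  then have small: "eventually (\<lambda>N. fps_nth logzeta_fps (3 * N) * r ^ (3 * N) < 1) sequentially"
    by (rule order_tendstoD) simp
  have "0 < r" using r powr_gt_zero[of 2 "-2 / 3"] by linarith
  have "(2 powr (-2 / 3)) ^ 3 < r ^ 3" using r by (intro power_strict_mono) auto
  moreover have "(2 powr (-2 / 3 :: real)) ^ 3 = 1 / 4"
    by (simp add: powr_realpow[symmetric] powr_powr powr_minus divide_simps)
  ultimately have "1 < 4 * r ^ 3" by simp
  define c where "c = 4 * r ^ 3"
  have "filterlim (\<lambda>N. c ^ N / (3 * real N)) at_top at_top"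
    using \<open>1 < 4 * r ^ 3\<close> unfolding c_def[symmetric] by real_asymp
  then have big: "eventually (\<lambda>N. 1 \<le> (4 * r ^ 3) ^ N / (3 * real N)) sequentially"
    by (simp add: filterlim_at_top c_def)
  have "eventually (\<lambda>N. (4 * r ^ 3) ^ N / (3 * real N) \<le> fps_nth logzeta_fps (3 * N) * r ^ (3 * N)) sequentially"
    using eventually_gt_at_top[of 0]
  proof eventually_elim
    case (elim N)
    have "(4 * r ^ 3) ^ N / (3 * real N) = 4 ^ N / (3 * real N) * r ^ (3 * N)"
      by (simp add: power_mult_distrib power_mult)
    also have "\<dots> \<le> fps_nth logzeta_fps (3 * N) * r ^ (3 * N)"
      using logzeta_nth_ge[OF elim] \<open>0 < r\<close> by (intro mult_right_mono) auto
    finally show ?case .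
  qed
  with small big have "eventually (\<lambda>N. False) sequentially" by eventually_elim linarith
  then show False by simp
qed

lemma fps_conv_radius_logzeta: "fps_conv_radius logzeta_fps = ereal (2 powr (-2 / 3))"
proof (rule antisym)
  show "fps_conv_radius logzeta_fps \<le> ereal (2 powr (-2 / 3))"
    unfolding fps_conv_radius_def
    by (rule conv_radius_leI_ex') (use logzeta_not_summable in auto)
  have "ereal (2 powr (-2 / 3)) = conv_radius (\<lambda>n. (real n + 1) ^ 6 * (2 powr (2 / 3)) ^ n)"
    by (simp add: conv_radius_poly_times_power powr_minus_divide)
  also have "\<dots> \<le> fps_conv_radius logzeta_fps"
    unfolding fps_conv_radius_def
    by (intro conv_radius_le_of_eventually_le always_eventually allI)
      (simp add: logzeta_nth_nonneg logzeta_nth_le)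
  finally show "ereal (2 powr (-2 / 3)) \<le> fps_conv_radius logzeta_fps" .
qed

theorem mainTheorem11:
  shows "growth = ereal (2/3 * ln 2) \<and> conv_radius (fps_nth zeta_fps) = ereal (2 powr (-2/3))"
proof
  show "growth = ereal (2/3 * ln 2)" using growth_le growth_ge by (rule antisym)
  have "conv_radius (fps_nth zeta_fps) = fps_conv_radius logzeta_fps"
    using fps_conv_radius_exp_compose[OF logzeta_nth_nonneg] by (simp add: zeta_fps_def fps_conv_radius_def)
  then show "conv_radius (fps_nth zeta_fps) = ereal (2 powr (-2/3))" by (simp add: fps_conv_radius_logzeta)
qed

end
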